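(* Let $x$ be a left-computable number that is nearly computable. Then $x$ is regainingly approximable if and only if $x$ is speedable.
   Context: A real number is left-computable if there is a computable non-decreasing sequence of rationals converging to it. A real $x$ is regainingly approximable if there is a computable non-decreasing sequence of rationals $(x_n)_n$ converging to $x$ with $x - x_n < 2^{-n}$ for infinitely many $n\in\mathbb{N}$. A left-computable $x$ is speedable if there exist $\rho\in(0,1)$ and a computable strictly increasing sequence of rationals $(x_n)_n$ converging to $x$ such that $\frac{x-x_{n+1}}{x-x_n}\le\rho$ for infinitely many $n$. A function $f:\mathbb{N}\to\mathbb{N}$ is a modulus of convergence of a convergent sequence $(y_n)_n$ with limit $y$ if for all $n$ and all $m\ge f(n)$ we have $|y-y_m|<2^{-n}$; $(y_n)_n$ converges computably if it has a computable modulus of convergence. A sequence $(x_n)_n$ converges nearly computably if it converges and for every computable increasing function $s:\mathbb{N}\to\mathbb{N}$ the sequence $(x_{s(n+1)}-x_{s(n)})_n$ converges computably to $0$. A real is nearly computable if some computable sequence of rationals converges nearly computably to it. *)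

theory Defs
  imports Complex_Main
begin

datatype recf = Zero | Succ | Proj nat | Comp recf "recf list" | Prim recf recf | Mn recf

inductive eval_rf :: "recf \<Rightarrow> nat list \<Rightarrow> nat \<Rightarrow> bool" where
  zero: "eval_rf Zero xs 0"
| succ: "eval_rf Succ (x # xs) (Suc x)"
| proj: "i < length xs \<Longrightarrow> eval_rf (Proj i) xs (xs ! i)"
| comp: "length ys = length gs \<Longrightarrow> (\<forall>i < length gs. eval_rf (gs ! i) xs (ys ! i))
          \<Longrightarrow> eval_rf f ys z \<Longrightarrow> eval_rf (Comp f gs) xs z"
| prim0: "eval_rf f xs y \<Longrightarrow> eval_rf (Prim f g) (0 # xs) y"
| primS: "eval_rf (Prim f g) (n # xs) y \<Longrightarrow> eval_rf g (n # y # xs) z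
          \<Longrightarrow> eval_rf (Prim f g) (Suc n # xs) z"
| mn: "eval_rf f (n # xs) 0 \<Longrightarrow> (\<forall>m < n. \<exists>y. eval_rf f (m # xs) y \<and> 0 < y)
          \<Longrightarrow> eval_rf (Mn f) xs n"

definition computable_nat :: "(nat \<Rightarrow> nat) \<Rightarrow> bool" where
  "computable_nat f \<longleftrightarrow> (\<exists>r. \<forall>n. eval_rf r [n] (f n))"

definition computable_rat_seq :: "(nat \<Rightarrow> rat) \<Rightarrow> bool" where
  "computable_rat_seq q \<longleftrightarrow> (\<exists>a b c. computable_nat a \<and> computable_nat b \<and> computable_nat c \<and>
      (\<forall>n. q n = (of_nat (a n) - of_nat (b n)) / of_nat (Suc (c n))))"

definition left_computable :: "real \<Rightarrow> bool" where
  "left_computable x \<longleftrightarrow> (\<exists>q. computable_rat_seq q \<and> mono q \<and>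
      (\<lambda>n. real_of_rat (q n)) \<longlonglongrightarrow> x)"

definition regainingly_approximable :: "real \<Rightarrow> bool" where
  "regainingly_approximable x \<longleftrightarrow> (\<exists>q. computable_rat_seq q \<and> mono q \<and>
      (\<lambda>n. real_of_rat (q n)) \<longlonglongrightarrow> x \<and>
      infinite {n. x - real_of_rat (q n) < 1 / 2 ^ n})"

definition speedable :: "real \<Rightarrow> bool" where
  "speedable x \<longleftrightarrow> left_computable x \<and>
     (\<exists>\<rho>::real. 0 < \<rho> \<and> \<rho> < 1 \<and> (\<exists>q. computable_rat_seq q \<and> strict_mono q \<and>
        (\<lambda>n. real_of_rat (q n)) \<longlonglongrightarrow> x \<and>
        infinite {n. (x - real_of_rat (q (Suc n))) / (x - real_of_rat (q n)) \<le> \<rho>}))"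

definition is_modulus :: "(nat \<Rightarrow> nat) \<Rightarrow> (nat \<Rightarrow> real) \<Rightarrow> real \<Rightarrow> bool" where
  "is_modulus f y L \<longleftrightarrow> (\<forall>n. \<forall>m \<ge> f n. \<bar>L - y m\<bar> < 1 / 2 ^ n)"

definition converges_computably_to :: "(nat \<Rightarrow> real) \<Rightarrow> real \<Rightarrow> bool" where
  "converges_computably_to y L \<longleftrightarrow> y \<longlonglongrightarrow> L \<and> (\<exists>f. computable_nat f \<and> is_modulus f y L)"

definition converges_nearly_computably :: "(nat \<Rightarrow> real) \<Rightarrow> bool" where
  "converges_nearly_computably y \<longleftrightarrow> convergent y \<and>
     (\<forall>s. computable_nat s \<and> strict_mono s \<longrightarrow>
        converges_computably_to (\<lambda>n. y (s (Suc n)) - y (s n)) 0)"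

definition nearly_computable :: "real \<Rightarrow> bool" where
  "nearly_computable x \<longleftrightarrow> (\<exists>q. computable_rat_seq q \<and>
      converges_nearly_computably (\<lambda>n. real_of_rat (q n)) \<and>
      (\<lambda>n. real_of_rat (q n)) \<longlonglongrightarrow> x)"

end

theory Submission
  imports Defs "HOL-Library.Infinite_Set"
begin

text \<open>
  If \<open>x - q n < 2^-n\<close> infinitely often, the errors \<open>e n\<close> of the strictly increasing
  approximation \<open>q n - 2^-n\<close> are infinitely often below \<open>2 * 2^-n\<close>; hence the ratio
  \<open>e (n + 1) / e n\<close> cannot eventually exceed \<open>3/4\<close>, which is a speedup.

  Conversely, let \<open>q\<close> witness speedability with ratio \<open>\<rho>\<close> and let \<open>y\<close> converge nearly
  computably to \<open>x\<close>. One computably finds stages \<open>s\<close> with \<open>|y - q| < 2^-j\<close> at stage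
  \<open>s (j + 1)\<close>. A speedup inside the block \<open>[s j, s (j + 1))\<close> makes the gain
  \<open>q (s (j + 1)) - q (s j)\<close> at least \<open>(1 - \<rho>) (x - q (s (j + 1)))\<close>, while near computability,
  applied to the computable sequence \<open>s\<close>, gives a computable modulus bounding these gains
  through the values of \<open>y\<close>. Grouping the blocks into computable, sufficiently long
  superblocks and sampling \<open>q\<close> at their right ends yields a regaining approximation.
\<close>

section \<open>Mu-recursive functions of several arguments\<close>

definition computable_fun :: "nat \<Rightarrow> (nat list \<Rightarrow> nat) \<Rightarrow> bool" where
  "computable_fun k F \<longleftrightarrow> (\<exists>r. \<forall>xs. length xs = k \<longrightarrow> eval_rf r xs (F xs))"

lemma computable_fun_cong:
  assumes "computable_fun k F" "\<And>xs. length xs = k \<Longrightarrow> F xs = G xs"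
  shows "computable_fun k G"
  using assms unfolding computable_fun_def by metis

lemma computable_fun_zero: "computable_fun k (\<lambda>_. 0)"
  unfolding computable_fun_def by (auto intro: eval_rf.zero)

lemma computable_fun_proj: "i < k \<Longrightarrow> computable_fun k (\<lambda>xs. xs ! i)"
  unfolding computable_fun_def by (auto intro!: exI[of _ "Proj i"] eval_rf.proj)

lemma computable_fun_comp1:
  assumes "computable_fun 1 F" "computable_fun k G"
  shows "computable_fun k (\<lambda>xs. F [G xs])"
proof -
  obtain rf where "\<forall>xs. length xs = 1 \<longrightarrow> eval_rf rf xs (F xs)"
    using assms(1) unfolding computable_fun_def by blast
  moreover obtain r where "\<forall>xs. length xs = k \<longrightarrow> eval_rf r xs (G xs)"
    using assms(2) unfolding computable_fun_def by blast
  ultimately have "eval_rf (Comp rf [r]) xs (F [G xs])" if "length xs = k" for xs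
    using that by (intro eval_rf.comp[where ys = "[G xs]"]) auto
  then show ?thesis unfolding computable_fun_def by blast
qed

lemma computable_fun_comp2:
  assumes "computable_fun 2 F" "computable_fun k G1" "computable_fun k G2"
  shows "computable_fun k (\<lambda>xs. F [G1 xs, G2 xs])"
proof -
  obtain rf where "\<forall>xs. length xs = 2 \<longrightarrow> eval_rf rf xs (F xs)"
    using assms(1) unfolding computable_fun_def by blast
  moreover obtain r1 where "\<forall>xs. length xs = k \<longrightarrow> eval_rf r1 xs (G1 xs)"
    using assms(2) unfolding computable_fun_def by blast
  moreover obtain r2 where "\<forall>xs. length xs = k \<longrightarrow> eval_rf r2 xs (G2 xs)"
    using assms(3) unfolding computable_fun_def by blast
  ultimately have "eval_rf (Comp rf [r1, r2]) xs (F [G1 xs, G2 xs])" if "length xs = k" for xs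
    using that by (intro eval_rf.comp[where ys = "[G1 xs, G2 xs]"]) (auto simp: less_Suc_eq)
  then show ?thesis unfolding computable_fun_def by blast
qed

lemma computable_fun_succ: "computable_fun k G \<Longrightarrow> computable_fun k (\<lambda>xs. Suc (G xs))"
proof -
  have "computable_fun 1 (\<lambda>xs. Suc (xs ! 0))"
    unfolding computable_fun_def
    by (rule exI[of _ Succ]) (auto simp: length_Suc_conv intro: eval_rf.succ)
  then show "computable_fun k G \<Longrightarrow> computable_fun k (\<lambda>xs. Suc (G xs))"
    using computable_fun_comp1 by fastforce
qed

lemma computable_fun_const: "computable_fun k (\<lambda>_. c)"
  by (induction c) (use computable_fun_zero computable_fun_succ in auto)

lemma computable_fun_prim:
  assumes "computable_fun k F" "computable_fun (Suc (Suc k)) G"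
  shows "computable_fun (Suc k) (\<lambda>xs. rec_nat (F (tl xs)) (\<lambda>i y. G (i # y # tl xs)) (hd xs))"
proof -
  obtain rf where rf: "\<forall>xs. length xs = k \<longrightarrow> eval_rf rf xs (F xs)"
    using assms(1) unfolding computable_fun_def by blast
  obtain rg where rg: "\<forall>xs. length xs = Suc (Suc k) \<longrightarrow> eval_rf rg xs (G xs)"
    using assms(2) unfolding computable_fun_def by blast
  have "eval_rf (Prim rf rg) (n # ys) (rec_nat (F ys) (\<lambda>i y. G (i # y # ys)) n)"
    if "length ys = k" for n ys
    by (induction n) (use rf rg that in \<open>auto intro: eval_rf.prim0 eval_rf.primS\<close>)
  then have "eval_rf (Prim rf rg) xs (rec_nat (F (tl xs)) (\<lambda>i y. G (i # y # tl xs)) (hd xs))"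
    if "length xs = Suc k" for xs
    using that by (cases xs) auto
  then show ?thesis unfolding computable_fun_def by blast
qed

lemma computable_fun_mn:
  assumes "computable_fun (Suc k) F" "\<And>xs. length xs = k \<Longrightarrow> \<exists>n. F (n # xs) = 0"
  shows "computable_fun k (\<lambda>xs. LEAST n. F (n # xs) = 0)"
proof -
  obtain rf where rf: "\<forall>xs. length xs = Suc k \<longrightarrow> eval_rf rf xs (F xs)"
    using assms(1) unfolding computable_fun_def by blast
  have "eval_rf (Mn rf) xs (LEAST n. F (n # xs) = 0)" if len: "length xs = k" for xs
  proof (rule eval_rf.mn)
    let ?n = "LEAST n. F (n # xs) = 0"
    have "F (?n # xs) = 0" using assms(2)[OF len] by (rule LeastI_ex)
    then show "eval_rf rf (?n # xs) 0" using rf len by (metis length_Cons)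
    have "eval_rf rf (m # xs) (F (m # xs)) \<and> 0 < F (m # xs)" if "m < ?n" for m
      using rf len not_less_Least[OF that] by simp
    then show "\<forall>m < ?n. \<exists>y. eval_rf rf (m # xs) y \<and> 0 < y" by blast
  qed
  then show ?thesis unfolding computable_fun_def by blast
qed

lemma length_2_conv: "length xs = 2 \<longleftrightarrow> (\<exists>a b. xs = [a, b])"
  by (auto simp: numeral_2_eq_2 length_Suc_conv)

lemma computable_fun_add: "computable_fun k F \<Longrightarrow> computable_fun k G \<Longrightarrow> computable_fun k (\<lambda>xs. F xs + G xs)"
proof -
  have rec: "rec_nat b (\<lambda>i y. Suc y) a = a + b" for a b :: nat by (induction a) auto
  have "computable_fun 2 (\<lambda>xs. rec_nat (tl xs ! 0) (\<lambda>i y. Suc ((i # y # tl xs) ! 1)) (hd xs))"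
    using computable_fun_prim[of 1 "\<lambda>xs. xs ! 0" "\<lambda>zs. Suc (zs ! 1)"]
      computable_fun_proj computable_fun_succ by (simp add: numeral_2_eq_2)
  then have "computable_fun 2 (\<lambda>xs. xs ! 0 + xs ! 1)"
    by (rule computable_fun_cong) (auto simp: length_2_conv rec)
  then show "computable_fun k F \<Longrightarrow> computable_fun k G \<Longrightarrow> ?thesis"
    using computable_fun_comp2 by fastforce
qed

lemma computable_fun_mult: "computable_fun k F \<Longrightarrow> computable_fun k G \<Longrightarrow> computable_fun k (\<lambda>xs. F xs * G xs)"
proof -
  have rec: "rec_nat 0 (\<lambda>i y. y + b) a = a * b" for a b :: nat by (induction a) auto
  have "computable_fun 2 (\<lambda>xs. rec_nat 0 (\<lambda>i y. (i # y # tl xs) ! 1 + (i # y # tl xs) ! 2) (hd xs))"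
    using computable_fun_prim[of 1 "\<lambda>xs. 0" "\<lambda>zs. zs ! 1 + zs ! 2"] computable_fun_zero
      computable_fun_add[OF computable_fun_proj[of 1 3] computable_fun_proj[of 2 3]]
    by (simp add: numeral_2_eq_2 numeral_3_eq_3)
  then have "computable_fun 2 (\<lambda>xs. xs ! 0 * xs ! 1)"
    by (rule computable_fun_cong) (auto simp: length_2_conv rec)
  then show "computable_fun k F \<Longrightarrow> computable_fun k G \<Longrightarrow> ?thesis"
    using computable_fun_comp2 by fastforce
qed

lemma computable_fun_minus: "computable_fun k F \<Longrightarrow> computable_fun k G \<Longrightarrow> computable_fun k (\<lambda>xs. F xs - G xs)"
proof -
  have rec_pred: "rec_nat 0 (\<lambda>i y. i) a = a - 1" for a :: nat by (induction a) auto
  have rec_minus: "rec_nat b (\<lambda>i y. y - Suc 0) a = b - a" for a b :: nat by (induction a) auto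
  have "computable_fun 1 (\<lambda>xs. rec_nat 0 (\<lambda>i y. (i # y # tl xs) ! 0) (hd xs))"
    using computable_fun_prim[of 0 "\<lambda>xs. 0" "\<lambda>zs. zs ! 0"] computable_fun_zero
      computable_fun_proj[of 0 2] by (simp add: numeral_2_eq_2)
  then have pred: "computable_fun 1 (\<lambda>xs. xs ! 0 - 1)"
    by (rule computable_fun_cong) (auto simp: length_Suc_conv rec_pred)
  have "computable_fun 2 (\<lambda>xs. rec_nat (tl xs ! 0) (\<lambda>i y. (i # y # tl xs) ! 1 - 1) (hd xs))"
    using computable_fun_prim[of 1 "\<lambda>xs. xs ! 0" "\<lambda>zs. zs ! 1 - 1"] computable_fun_proj
      computable_fun_comp1[OF pred computable_fun_proj[of 1 3]]
    by (simp add: numeral_2_eq_2 numeral_3_eq_3)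
  then have "computable_fun 2 (\<lambda>xs. xs ! 1 - xs ! 0)"
    by (rule computable_fun_cong) (auto simp: length_2_conv rec_minus)
  then show "computable_fun k F \<Longrightarrow> computable_fun k G \<Longrightarrow> ?thesis"
    using computable_fun_comp2[of "\<lambda>xs. xs ! 1 - xs ! 0" k G F] by simp
qed

lemma computable_fun_pow2: "computable_fun k F \<Longrightarrow> computable_fun k (\<lambda>xs. 2 ^ F xs)"
proof -
  have rec: "rec_nat (Suc 0) (\<lambda>i y. y + y) a = (2::nat) ^ a" for a by (induction a) auto
  have "computable_fun 1 (\<lambda>xs. rec_nat 1 (\<lambda>i y. (i # y # tl xs) ! 1 + (i # y # tl xs) ! 1) (hd xs))"
    using computable_fun_prim[of 0 "\<lambda>xs. 1" "\<lambda>zs. zs ! 1 + zs ! 1"] computable_fun_const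
      computable_fun_add[OF computable_fun_proj[of 1 2] computable_fun_proj[of 1 2]]
    by (simp add: numeral_2_eq_2)
  then have "computable_fun 1 (\<lambda>xs. 2 ^ (xs ! 0))"
    by (rule computable_fun_cong) (auto simp: length_Suc_conv rec)
  then show "computable_fun k F \<Longrightarrow> ?thesis"
    using computable_fun_comp1 by fastforce
qed

lemma computable_nat_iff_computable_fun: "computable_nat f \<longleftrightarrow> computable_fun 1 (\<lambda>xs. f (xs ! 0))"
  unfolding computable_nat_def computable_fun_def
  by (metis One_nat_def length_Suc_conv length_0_conv nth_Cons_0)

lemma computable_fun_app: "computable_nat f \<Longrightarrow> computable_fun k F \<Longrightarrow> computable_fun k (\<lambda>xs. f (F xs))"
  using computable_fun_comp1 unfolding computable_nat_iff_computable_fun by fastforce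

lemma computable_nat_comp: "computable_nat f \<Longrightarrow> computable_nat g \<Longrightarrow> computable_nat (\<lambda>n. f (g n))"
  using computable_fun_app unfolding computable_nat_iff_computable_fun by blast

lemma computable_nat_rec_nat:
  assumes "computable_fun 2 (\<lambda>zs. G (zs ! 0) (zs ! 1))"
  shows "computable_nat (rec_nat a G)"
proof -
  have "computable_fun 1 (\<lambda>xs. rec_nat a (\<lambda>i y. G ((i # y # tl xs) ! 0) ((i # y # tl xs) ! 1)) (hd xs))"
    using computable_fun_prim[OF computable_fun_const, of 0 "\<lambda>zs. G (zs ! 0) (zs ! 1)" a] assms
    by (simp add: numeral_2_eq_2)
  then show ?thesis
    unfolding computable_nat_iff_computable_fun
    by (rule computable_fun_cong) (auto simp: length_Suc_conv)
qed

lemma computable_strict_mono_majorant: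
  assumes "computable_nat g"
  obtains H where "computable_nat H" "strict_mono H" "\<And>m. g m \<le> H m"
proof
  define H where "H = rec_nat (g 0) (\<lambda>i y. y + Suc (g (Suc i)))"
  have "computable_fun 2 (\<lambda>zs. zs ! 1 + Suc (g (Suc (zs ! 0))))"
    by (intro computable_fun_add computable_fun_succ computable_fun_app[OF assms] computable_fun_proj) auto
  then show "computable_nat H"
    unfolding H_def by (rule computable_nat_rec_nat)
  show "strict_mono H" unfolding strict_mono_Suc_iff H_def by simp
  show "g m \<le> H m" for m by (cases m) (simp_all add: H_def)
qed

section \<open>Computable rational sequences\<close>

lemma computable_rat_seq_comp:
  assumes "computable_rat_seq q" "computable_nat g"
  shows "computable_rat_seq (\<lambda>n. q (g n))"
  using assms computable_nat_comp unfolding computable_rat_seq_def by metis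

lemma computable_rat_seq_minus_pow2:
  assumes "computable_rat_seq q"
  shows "computable_rat_seq (\<lambda>n. q n - 1 / 2 ^ n)"
proof -
  obtain a b c where ca: "computable_nat a" and cb: "computable_nat b" and cc: "computable_nat c"
    and q: "\<And>n. q n = (of_nat (a n) - of_nat (b n)) / of_nat (Suc (c n))"
    using assms unfolding computable_rat_seq_def by blast
  have "q n - 1 / 2 ^ n = (of_nat (a n * 2 ^ n) - of_nat (b n * 2 ^ n + c n + 1))
      / of_nat (Suc (Suc (c n) * 2 ^ n - 1))" for n
  proof -
    have "Suc (Suc (c n) * 2 ^ n - 1) = Suc (c n) * 2 ^ n" by (simp add: Suc_le_eq)
    then show ?thesis unfolding q by (simp add: field_simps)
  qed
  moreover have "computable_nat (\<lambda>n. a n * 2 ^ n)" "computable_nat (\<lambda>n. b n * 2 ^ n + c n + 1)"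
    "computable_nat (\<lambda>n. Suc (c n) * 2 ^ n - 1)"
    unfolding computable_nat_iff_computable_fun
    by (intro computable_fun_add computable_fun_mult computable_fun_minus computable_fun_succ
        computable_fun_pow2 computable_fun_app[OF ca] computable_fun_app[OF cb]
        computable_fun_app[OF cc] computable_fun_proj computable_fun_const; simp)+
  ultimately show ?thesis unfolding computable_rat_seq_def by blast
qed

text \<open>With truncated subtraction, \<open>(P - N) + (N - P)\<close> is the distance of \<open>P\<close> and \<open>N\<close>.\<close>

lemma abs_diff_fractions_less_pow2_iff:
  fixes a b c a' b' c' j :: nat
  defines "P \<equiv> a * Suc c' + b' * Suc c" and "N \<equiv> b * Suc c' + a' * Suc c"
  shows "\<bar>(real a - real b) / Suc c - (real a' - real b') / Suc c'\<bar> < 1 / 2 ^ j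
    \<longleftrightarrow> ((P - N) + (N - P)) * 2 ^ j < Suc c * Suc c'"
proof -
  have "(real a - real b) / Suc c - (real a' - real b') / Suc c' = (real P - real N) / (Suc c * Suc c')"
    unfolding P_def N_def by (simp add: field_simps)
  moreover have "\<bar>u / S\<bar> < 1 / 2 ^ j \<longleftrightarrow> \<bar>u\<bar> * 2 ^ j < S" if "0 < S" for u S :: real
    using that by (simp add: abs_divide field_simps)
  moreover have "\<bar>real P - real N\<bar> = real ((P - N) + (N - P))"
    by (cases "P \<le> N") (auto simp: of_nat_diff)
  ultimately have "\<bar>(real a - real b) / Suc c - (real a' - real b') / Suc c'\<bar> < 1 / 2 ^ j
    \<longleftrightarrow> real (((P - N) + (N - P)) * 2 ^ j) < real (Suc c * Suc c')"
    by (metis of_nat_0_less_iff of_nat_mult of_nat_numeral of_nat_power zero_less_Suc mult_pos_pos)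
  then show ?thesis by (simp only: of_nat_less_iff)
qed

lemma computable_rat_seqs_closeness_decidable:
  assumes "computable_rat_seq q" "computable_rat_seq q'"
  obtains D where "computable_fun 2 D"
    "\<And>m j. D [m, j] = 0 \<longleftrightarrow> \<bar>real_of_rat (q m) - real_of_rat (q' m)\<bar> < 1 / 2 ^ j"
proof -
  obtain a b c where ca: "computable_nat a" and cb: "computable_nat b" and cc: "computable_nat c"
    and q: "\<And>n. q n = (of_nat (a n) - of_nat (b n)) / of_nat (Suc (c n))"
    using assms(1) unfolding computable_rat_seq_def by blast
  obtain a' b' c' where ca': "computable_nat a'" and cb': "computable_nat b'" and cc': "computable_nat c'"
    and q': "\<And>n. q' n = (of_nat (a' n) - of_nat (b' n)) / of_nat (Suc (c' n))"
    using assms(2) unfolding computable_rat_seq_def by blast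
  define P where "P m = a m * Suc (c' m) + b' m * Suc (c m)" for m
  define N where "N m = b m * Suc (c' m) + a' m * Suc (c m)" for m
  \<comment> \<open>\<open>1 - (u - v)\<close> vanishes exactly when \<open>v < u\<close>\<close>
  define D where "D zs = 1 - (Suc (c (zs ! 0)) * Suc (c' (zs ! 0))
    - ((P (zs ! 0) - N (zs ! 0)) + (N (zs ! 0) - P (zs ! 0))) * 2 ^ (zs ! 1))" for zs
  show ?thesis
  proof
    show "computable_fun 2 D"
      unfolding D_def P_def N_def
      by (intro computable_fun_minus computable_fun_mult computable_fun_add computable_fun_succ
          computable_fun_pow2 computable_fun_app[OF ca] computable_fun_app[OF cb] computable_fun_app[OF cc]
          computable_fun_app[OF ca'] computable_fun_app[OF cb'] computable_fun_app[OF cc']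
          computable_fun_proj computable_fun_const; simp)
    fix m j
    have "D [m, j] = 0 \<longleftrightarrow> ((P m - N m) + (N m - P m)) * 2 ^ j < Suc (c m) * Suc (c' m)"
      unfolding D_def by auto
    also have "\<dots> \<longleftrightarrow> \<bar>real_of_rat (q m) - real_of_rat (q' m)\<bar> < 1 / 2 ^ j"
      unfolding P_def N_def q q'
      by (simp add: abs_diff_fractions_less_pow2_iff of_rat_divide of_rat_diff del: of_nat_Suc)
    finally show "D [m, j] = 0 \<longleftrightarrow> \<bar>real_of_rat (q m) - real_of_rat (q' m)\<bar> < 1 / 2 ^ j" .
  qed
qed

lemma computable_search_infinitely_often:
  assumes "computable_fun 2 D" "\<And>j. infinite {m. D [m, j] = 0}"
  obtains s where "computable_nat s" "strict_mono s" "s 0 = 0" "\<And>j. D [s (Suc j), j] = 0"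
proof -
  define T where "T zs = D [zs ! 2 + 1 + zs ! 0, zs ! 1]" for zs
  have T_zero: "\<exists>d. T (d # xs) = 0" if "length xs = 2" for xs
  proof -
    obtain j y where xs: "xs = [j, y]" using \<open>length xs = 2\<close> by (auto simp: length_2_conv)
    obtain m where "Suc y \<le> m" "D [m, j] = 0"
      using assms(2)[of j] unfolding infinite_nat_iff_unbounded_le by blast
    then have "T ((m - Suc y) # xs) = 0" unfolding T_def xs by simp
    then show ?thesis ..
  qed
  define s where "s = rec_nat 0 (\<lambda>j y. y + 1 + (LEAST d. T [d, j, y] = 0))"
  have s_Suc: "s (Suc j) = s j + 1 + (LEAST d. T [d, j, s j] = 0)" for j
    unfolding s_def by simp
  show ?thesis
  proof
    have "computable_fun 3 T"
      unfolding T_def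
      by (intro computable_fun_comp2[OF assms(1)] computable_fun_add computable_fun_proj
          computable_fun_const) auto
    then have "computable_fun 2 (\<lambda>xs. LEAST d. T (d # xs) = 0)"
      using T_zero by (intro computable_fun_mn) (auto simp: numeral_3_eq_3)
    then have "computable_fun 2 (\<lambda>zs. zs ! 1 + 1 + (LEAST d. T [d, zs ! 0, zs ! 1] = 0))"
      by (intro computable_fun_add computable_fun_proj computable_fun_const;
          auto elim!: computable_fun_cong simp: length_2_conv)
    then show "computable_nat s"
      unfolding s_def by (rule computable_nat_rec_nat)
    show "strict_mono s" unfolding strict_mono_Suc_iff s_Suc by simp
    show "s 0 = 0" unfolding s_def by simp
    show "D [s (Suc j), j] = 0" for j
      using LeastI_ex[OF T_zero[of "[j, s j]"]] unfolding s_Suc T_def by simp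
  qed
qed

lemma computable_stages_close:
  assumes "computable_rat_seq q" "computable_rat_seq q'"
    and "(\<lambda>n. real_of_rat (q n) - real_of_rat (q' n)) \<longlonglongrightarrow> 0"
  obtains s where "computable_nat s" "strict_mono s" "s 0 = 0"
    "\<And>j. \<bar>real_of_rat (q (s (Suc j))) - real_of_rat (q' (s (Suc j)))\<bar> < 1 / 2 ^ j"
proof -
  obtain D where D: "computable_fun 2 D"
    "\<And>m j. D [m, j] = 0 \<longleftrightarrow> \<bar>real_of_rat (q m) - real_of_rat (q' m)\<bar> < 1 / 2 ^ j"
    using computable_rat_seqs_closeness_decidable[OF assms(1,2)] by blast
  have infinitely_close: "infinite {m. D [m, j] = 0}" for j
  proof -
    obtain m0 where "\<forall>m\<ge>m0. D [m, j] = 0"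
      using assms(3)[unfolded LIMSEQ_def, rule_format, of "1 / 2 ^ j"] by (auto simp: D(2) dist_real_def)
    then have "{m0..} \<subseteq> {m. D [m, j] = 0}" by auto
    then show ?thesis using infinite_Ici infinite_super by blast
  qed
  obtain s where "computable_nat s" "strict_mono s" "s 0 = 0" "\<And>j. D [s (Suc j), j] = 0"
    using computable_search_infinitely_often[OF D(1) infinitely_close] by blast
  with D(2) show ?thesis using that by blast
qed

section \<open>Speedups along blocks of stages\<close>

lemma strict_mono_block:
  fixes s :: "nat \<Rightarrow> nat"
  assumes "strict_mono s" "s 0 \<le> n"
  obtains j where "s j \<le> n" "n < s (Suc j)"
proof -
  have "n < s (Suc n)" using seq_suble[OF assms(1), of "Suc n"] by simp
  then obtain j where "\<not> n < s j" "n < s (j + 1)"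
    using ex_least_nat_less[of "\<lambda>j. n < s j"] assms(2) by auto
  then show ?thesis using that by (simp add: not_less)
qed

lemma speedup_in_block:
  fixes Q :: "nat \<Rightarrow> real"
  assumes "mono Q" "0 \<le> \<rho>" "\<rho> \<le> 1" "x - Q (Suc n) \<le> \<rho> * (x - Q n)" "a \<le> n" "n < b"
  shows "(1 - \<rho>) * (x - Q b) \<le> Q b - Q a"
proof -
  have "Q a \<le> Q n" "Q (Suc n) \<le> Q b" using assms(1,5,6) by (auto simp: mono_def)
  then have "x - Q b \<le> \<rho> * (x - Q b) + \<rho> * (Q b - Q a)"
    using assms(2,4) mult_left_mono[of "x - Q n" "x - Q a" \<rho>] by (simp add: algebra_simps)
  moreover have "Q a \<le> Q b" using assms(1,5,6) by (simp add: monoD)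
  then have "\<rho> * (Q b - Q a) \<le> Q b - Q a" using assms(2,3) by (simp add: mult_left_le_one_le)
  ultimately show ?thesis by (simp add: algebra_simps)
qed

lemma infinite_speedup_blocks:
  fixes Q :: "nat \<Rightarrow> real"
  assumes "mono Q" "0 \<le> \<rho>" "\<rho> \<le> 1" "infinite {n. x - Q (Suc n) \<le> \<rho> * (x - Q n)}"
    and "strict_mono s" "s 0 = 0"
  shows "infinite {j. (1 - \<rho>) * (x - Q (s (Suc j))) \<le> Q (s (Suc j)) - Q (s j)}"
  unfolding infinite_nat_iff_unbounded_le
proof
  fix j0
  obtain n where n: "s j0 \<le> n" "x - Q (Suc n) \<le> \<rho> * (x - Q n)"
    using assms(4) unfolding infinite_nat_iff_unbounded_le by blast
  obtain j where j: "s j \<le> n" "n < s (Suc j)"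
    using strict_mono_block[OF assms(5), of n] assms(6) by auto
  have "s j0 < s (Suc j)" using n(1) j(2) by linarith
  then have "j0 \<le> j" using strict_mono_less[OF assms(5)] less_Suc_eq_le by blast
  moreover have "(1 - \<rho>) * (x - Q (s (Suc j))) \<le> Q (s (Suc j)) - Q (s j)"
    using speedup_in_block[OF assms(1-3) n(2) j] .
  ultimately show "\<exists>j\<ge>j0. j \<in> {j. (1 - \<rho>) * (x - Q (s (Suc j))) \<le> Q (s (Suc j)) - Q (s j)}"
    by blast
qed

lemma increment_bound_from_modulus:
  fixes Y Q :: "nat \<Rightarrow> real"
  assumes close: "\<And>j. \<bar>Y (Suc j) - Q (Suc j)\<bar> < 1 / 2 ^ j"
    and modulus: "is_modulus f (\<lambda>j. Y (Suc j) - Y j) 0" and "f k \<le> j" "k < j"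
  shows "Q (Suc j) - Q j < 3 / 2 ^ k"
proof -
  obtain i where j: "j = Suc i" and "k \<le> i" using \<open>k < j\<close> by (cases j) auto
  have halve: "1 / 2 ^ b \<le> (1::real) / 2 ^ a" if "a \<le> b" for a b
    using that by (intro divide_left_mono power_increasing) auto
  have "\<bar>Y (Suc j) - Y j\<bar> < 1 / 2 ^ k" using modulus \<open>f k \<le> j\<close> unfolding is_modulus_def by force
  moreover have "\<bar>Y (Suc j) - Q (Suc j)\<bar> < 1 / 2 ^ k"
    using close[of j] halve[of k j] \<open>k < j\<close> by linarith
  moreover have "\<bar>Y j - Q j\<bar> < 1 / 2 ^ k"
    using close[of i] halve[OF \<open>k \<le> i\<close>] unfolding j by linarith
  ultimately show ?thesis by linarith
qed

lemma infinite_small_at_block_ends: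
  fixes E :: "nat \<Rightarrow> real"
  assumes "decseq E" "strict_mono H" "infinite G"
    and small: "\<And>m j. j \<in> G \<Longrightarrow> H m < j \<Longrightarrow> j \<le> H (Suc m) \<Longrightarrow> E j < 1 / 2 ^ Suc m"
  shows "infinite {m. E (H m) < 1 / 2 ^ m}"
  unfolding infinite_nat_iff_unbounded_le
proof
  fix m0
  obtain j where j: "j \<in> G" "Suc (H m0) \<le> j"
    using assms(3) unfolding infinite_nat_iff_unbounded_le by blast
  have "H 0 \<le> j - 1" using strict_mono_less_eq[OF assms(2), of 0 m0] j(2) by simp
  then obtain m where "H m \<le> j - 1" "j - 1 < H (Suc m)"
    using strict_mono_block[OF assms(2)] by blast
  then have m: "H m < j" "j \<le> H (Suc m)" using j(2) by auto
  have "H m0 < H (Suc m)" using j(2) m(2) by linarith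
  then have "m0 \<le> Suc m" using strict_mono_less[OF assms(2)] by fastforce
  moreover have "E (H (Suc m)) \<le> E j" using assms(1) m(2) by (simp add: decseq_def)
  then have "E (H (Suc m)) < 1 / 2 ^ Suc m" using small[OF j(1)] m by force
  ultimately show "\<exists>m\<ge>m0. m \<in> {m. E (H m) < 1 / 2 ^ m}" by blast
qed

lemma infinite_regaining_at_block_ends:
  fixes Q Y :: "nat \<Rightarrow> real"
  assumes "mono Q" "0 \<le> \<rho>" "\<rho> < 1" "infinite {n. x - Q (Suc n) \<le> \<rho> * (x - Q n)}"
    and s: "strict_mono s" "s 0 = 0" "\<And>j. \<bar>Y (s (Suc j)) - Q (s (Suc j))\<bar> < 1 / 2 ^ j"
    and modulus: "is_modulus f (\<lambda>j. Y (s (Suc j)) - Y (s j)) 0"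
    and c: "3 < (1 - \<rho>) * 2 ^ c"
    and H: "strict_mono H" "\<And>m. f (Suc m + c) \<le> H m" "\<And>m. Suc m + c \<le> H m"
  shows "infinite {m. x - Q (s (Suc (H m))) < 1 / 2 ^ m}"
proof (rule infinite_small_at_block_ends[OF _ H(1)])
  show "decseq (\<lambda>j. x - Q (s (Suc j)))"
    using assms(1) s(1) by (simp add: decseq_def monoD strict_mono_less_eq)
  show "infinite {j. (1 - \<rho>) * (x - Q (s (Suc j))) \<le> Q (s (Suc j)) - Q (s j)}"
    using assms(1-4) s(1,2) by (intro infinite_speedup_blocks) auto
  fix m j
  assume j: "j \<in> {j. (1 - \<rho>) * (x - Q (s (Suc j))) \<le> Q (s (Suc j)) - Q (s j)}"
    "H m < j" "j \<le> H (Suc m)"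
  have "Q (s (Suc j)) - Q (s j) < 3 / 2 ^ (Suc m + c)"
    using H(2,3)[of m] j(2)
    by (intro increment_bound_from_modulus[of "\<lambda>j. Y (s j)" "\<lambda>j. Q (s j)", OF s(3) modulus]) auto
  also have "\<dots> < (1 - \<rho>) * (1 / 2 ^ Suc m)"
    using c by (simp add: power_add field_simps)
  finally have "(1 - \<rho>) * (x - Q (s (Suc j))) < (1 - \<rho>) * (1 / 2 ^ Suc m)"
    using j(1) by simp
  then show "x - Q (s (Suc j)) < 1 / 2 ^ Suc m"
    by (rule mult_left_less_imp_less) (use \<open>\<rho> < 1\<close> in simp)
qed

section \<open>Regaining approximations and speedups\<close>

lemma infinite_ratio_le_if_infinitely_small:
  fixes e :: "nat \<Rightarrow> real"
  assumes pos: "\<And>n. 0 < e n" and small: "infinite {n. e n < C * r ^ n}"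
    and "0 < r" "r < \<rho>"
  shows "infinite {n. e (Suc n) \<le> \<rho> * e n}"
proof
  assume "finite {n. e (Suc n) \<le> \<rho> * e n}"
  then obtain m where "\<forall>n\<in>{n. e (Suc n) \<le> \<rho> * e n}. n \<le> m"
    unfolding finite_nat_set_iff_bounded_le by blast
  then have slow: "\<rho> * e n < e (Suc n)" if "Suc m \<le> n" for n
    using that by (auto simp: not_le[symmetric])
  define N where "N = Suc m"
  have "0 < \<rho>" using assms by linarith
  have lower: "\<rho> ^ k * e N \<le> e (N + k)" for k
  proof (induction k)
    case (Suc k)
    have "\<rho> ^ Suc k * e N \<le> \<rho> * e (N + k)"
      using Suc \<open>0 < \<rho>\<close> by (simp add: mult.assoc)
    also have "\<dots> \<le> e (N + Suc k)" using slow[of "N + k"] by (simp add: N_def)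
    finally show ?case .
  qed simp
  obtain K where "C * r ^ N / e N < (\<rho> / r) ^ K"
    using real_arch_pow[of "\<rho> / r"] assms by auto
  then have K: "C * r ^ N < (\<rho> / r) ^ K * e N"
    using pos[of N] by (simp add: pos_divide_less_eq)
  obtain n where n: "N + K \<le> n" "e n < C * r ^ n"
    using small unfolding infinite_nat_iff_unbounded_le by blast
  define k where "k = n - N"
  have nk: "n = N + k" using n(1) unfolding k_def by simp
  have "(\<rho> / r) ^ k * e N * r ^ k = \<rho> ^ k * e N"
    using \<open>0 < r\<close> by (simp add: power_divide)
  also have "\<dots> < C * r ^ N * r ^ k"
    using lower[of k] n(2) unfolding nk by (simp add: power_add mult.assoc)
  finally have "(\<rho> / r) ^ k * e N < C * r ^ N"
    using \<open>0 < r\<close> by simp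
  moreover have "(\<rho> / r) ^ K * e N \<le> (\<rho> / r) ^ k * e N"
    using n(1) assms less_imp_le[OF pos] unfolding nk by (intro mult_right_mono power_increasing) auto
  ultimately show False using K by linarith
qed

lemma regainingly_approximable_imp_speedable:
  assumes "left_computable x" "regainingly_approximable x"
  shows "speedable x"
proof -
  obtain q where q: "computable_rat_seq q" "mono q" "(\<lambda>n. real_of_rat (q n)) \<longlonglongrightarrow> x"
    and regain: "infinite {n. x - real_of_rat (q n) < 1 / 2 ^ n}"
    using assms(2) unfolding regainingly_approximable_def by blast
  define p where "p n = q n - 1 / 2 ^ n" for n
  define e where "e n = x - real_of_rat (p n)" for n
  have e: "e n = (x - real_of_rat (q n)) + 1 / 2 ^ n" for n
    by (simp add: e_def p_def of_rat_diff of_rat_divide of_rat_power)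
  have "incseq (\<lambda>n. real_of_rat (q n))"
    using q(2) by (simp add: mono_def of_rat_less_eq)
  then have e_pos: "0 < e n" for n
    using incseq_le[OF _ q(3)] unfolding e by (simp add: add_nonneg_pos)
  have "strict_mono p"
  proof (unfold strict_mono_Suc_iff, rule allI)
    fix n
    have "q n \<le> q (Suc n)" "1 / 2 ^ Suc n < (1 / 2 ^ n :: rat)"
      using q(2) by (simp_all add: monoD divide_simps)
    then show "p n < p (Suc n)" unfolding p_def by linarith
  qed
  moreover have "(\<lambda>n. real_of_rat (p n)) \<longlonglongrightarrow> x"
  proof -
    have "(\<lambda>n. 1 / 2 ^ n :: real) \<longlonglongrightarrow> 0"
      using LIMSEQ_realpow_zero[of "1 / 2 :: real"] by (simp add: power_one_over)
    from tendsto_diff[OF q(3) this] show ?thesis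
      by (simp add: p_def of_rat_diff of_rat_divide of_rat_power)
  qed
  moreover have "infinite {n. e (Suc n) \<le> 3 / 4 * e n}"
  proof (rule infinite_ratio_le_if_infinitely_small[where C = 2 and r = "1 / 2"])
    have "{n. x - real_of_rat (q n) < 1 / 2 ^ n} \<subseteq> {n. e n < 2 * (1 / 2) ^ n}"
      by (auto simp: e power_one_over)
    then show "infinite {n. e n < 2 * (1 / 2) ^ n}"
      using regain finite_subset by blast
  qed (use e_pos in auto)
  then have "infinite {n. (x - real_of_rat (p (Suc n))) / (x - real_of_rat (p n)) \<le> 3 / 4}"
    using e_pos by (simp add: e_def pos_divide_le_eq)
  moreover have "computable_rat_seq p"
    unfolding p_def by (rule computable_rat_seq_minus_pow2[OF q(1)])
  moreover have "0 < (3 / 4 :: real)" "(3 / 4 :: real) < 1" by simp_all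
  ultimately show ?thesis
    unfolding speedable_def using assms(1) by blast
qed

lemma regainingly_approximable_subseqI:
  assumes "computable_rat_seq q" "mono q" "(\<lambda>n. real_of_rat (q n)) \<longlonglongrightarrow> x"
    and "computable_nat idx" "strict_mono idx"
    and "infinite {m. x - real_of_rat (q (idx m)) < 1 / 2 ^ m}"
  shows "regainingly_approximable x"
proof -
  have "mono (\<lambda>m. q (idx m))"
    using assms(2,5) by (simp add: mono_def strict_mono_less_eq)
  moreover have "(\<lambda>m. real_of_rat (q (idx m))) \<longlonglongrightarrow> x"
    using LIMSEQ_subseq_LIMSEQ[OF assms(3,5)] by (simp add: o_def)
  ultimately show ?thesis
    unfolding regainingly_approximable_def
    using computable_rat_seq_comp[OF assms(1,4)] assms(6) by blast
qed

lemma speedable_imp_regainingly_approximable: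
  assumes "nearly_computable x" "speedable x"
  shows "regainingly_approximable x"
proof -
  obtain q' where q': "computable_rat_seq q'" "converges_nearly_computably (\<lambda>n. real_of_rat (q' n))"
    "(\<lambda>n. real_of_rat (q' n)) \<longlonglongrightarrow> x"
    using assms(1) unfolding nearly_computable_def by blast
  obtain \<rho> :: real and q where \<rho>: "0 < \<rho>" "\<rho> < 1"
    and q: "computable_rat_seq q" "strict_mono q" "(\<lambda>n. real_of_rat (q n)) \<longlonglongrightarrow> x"
    and speed: "infinite {n. (x - real_of_rat (q (Suc n))) / (x - real_of_rat (q n)) \<le> \<rho>}"
    using assms(2) unfolding speedable_def by blast
  define Q where "Q n = real_of_rat (q n)" for n
  have "strict_mono Q" using q(2) by (simp add: Q_def strict_mono_def of_rat_less)
  then have "mono Q" by (rule strict_mono_mono)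
  have "Q n < x" for n
    using \<open>strict_mono Q\<close> incseq_le[OF \<open>mono Q\<close> q(3)[folded Q_def], of "Suc n"]
    unfolding strict_mono_Suc_iff by (meson order_less_le_trans)
  then have speed': "infinite {n. x - Q (Suc n) \<le> \<rho> * (x - Q n)}"
    using speed by (simp add: Q_def pos_divide_le_eq)
  obtain s where s: "computable_nat s" "strict_mono s" "s 0 = 0"
    "\<And>j. \<bar>real_of_rat (q' (s (Suc j))) - Q (s (Suc j))\<bar> < 1 / 2 ^ j"
    using computable_stages_close[OF q'(1) q(1)] tendsto_diff[OF q'(3) q(3)] unfolding Q_def by auto
  obtain f where f: "computable_nat f"
    "is_modulus f (\<lambda>j. real_of_rat (q' (s (Suc j))) - real_of_rat (q' (s j))) 0"
    using q'(2) s(1,2) unfolding converges_nearly_computably_def converges_computably_to_def by blast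
  obtain c :: nat where "3 / (1 - \<rho>) < 2 ^ c" using real_arch_pow[of 2] by auto
  then have c: "3 < (1 - \<rho>) * 2 ^ c" using \<rho> by (simp add: pos_divide_less_eq mult.commute)
  have "computable_nat (\<lambda>m. f (Suc m + c) + (Suc m + c))"
    unfolding computable_nat_iff_computable_fun
    by (intro computable_fun_add computable_fun_app[OF f(1)] computable_fun_succ
        computable_fun_proj computable_fun_const) auto
  then obtain H where H: "computable_nat H" "strict_mono H" "\<And>m. f (Suc m + c) + (Suc m + c) \<le> H m"
    using computable_strict_mono_majorant by blast
  have H_above: "f (Suc m + c) \<le> H m" "Suc m + c \<le> H m" for m
    using H(3)[of m] by linarith+
  define idx where "idx m = s (Suc (H m))" for m
  have "infinite {m. x - Q (idx m) < 1 / 2 ^ m}"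
    unfolding idx_def using \<open>mono Q\<close> \<rho> speed' s(2-4) f(2) c H(2) H_above
    by (intro infinite_regaining_at_block_ends) auto
  moreover have "strict_mono idx"
    using s(2) H(2) by (simp add: idx_def strict_mono_def)
  moreover have "computable_nat idx"
    unfolding idx_def computable_nat_iff_computable_fun
    by (intro computable_fun_app[OF s(1)] computable_fun_succ computable_fun_app[OF H(1)]
        computable_fun_proj) auto
  ultimately show ?thesis
    using regainingly_approximable_subseqI[OF q(1) strict_mono_mono[OF q(2)] q(3)]
    unfolding Q_def by blast
qed

theorem corollary5p9:
  fixes x :: real
  assumes "left_computable x"
    and "nearly_computable x"
  shows "regainingly_approximable x \<longleftrightarrow> speedable x"
  using regainingly_approximable_imp_speedable[OF assms(1)]
    speedable_imp_regainingly_approximable[OF assms(2)] by blast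

end
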